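(* Consider a slotted system with diversity. There are $N$ users, $N_{sub}\ge2$ sub-carriers and slots $1,\dots,T$, where $0<\alpha<1$, $\alpha T\in\mathbb Z$ and $(1-\alpha)T$ is even. The BS uses pmfs $\mathbf p$ on users and $\mathbf q$ on sub-carriers: in every slot, independently, it chooses user $i$ with probability $p_i$ and sub-carrier $j$ with probability $q_j$, and sends an update to the chosen user on the chosen sub-carrier. The adversary uses the strategy $\sigma'$: in each slot $t\in\{\frac{(1-\alpha)T}2+1,\dots,\frac{(1+\alpha)T}2\}$ it blocks one sub-carrier chosen uniformly at random, independently of everything else, and it blocks nothing in other slots. Ages satisfy $a_i(1)=1$, $a_i(t+1)=1$ if user $i$ is chosen in slot $t$ on an unblocked sub-carrier, and $a_i(t+1)=a_i(t)+1$ otherwise. Let $\Delta^{\mathbf p,\mathbf q,\sigma'}=\frac1T\sum_{t=1}^T\frac1N\sum_i\mathbb E[a_i(t)]$. Then the pair (uniform $\mathbf p$, uniform $\mathbf q$) minimizes $\Delta^{\mathbf p,\mathbf q,\sigma'}$ over all pmfs $\mathbf p$ on the users and $\mathbf q$ on the sub-carriers.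
   Context: The expectation is over both the BS's and the adversary's randomness. *)

theory Defs
  imports "HOL-Probability.Probability"
begin

text \<open>Outcome of one slot: (user chosen by BS, sub-carrier chosen by BS,
  sub-carrier blocked by adversary (None = nothing blocked)).\<close>
type_synonym slot_outcome = "nat \<times> nat \<times> nat option"

definition attacked_slot :: "real \<Rightarrow> nat \<Rightarrow> nat \<Rightarrow> bool" where
  "attacked_slot \<alpha> T t \<longleftrightarrow>
     (1 - \<alpha>) * real T / 2 + 1 \<le> real t \<and> real t \<le> (1 + \<alpha>) * real T / 2"

definition slot_pmf ::
  "nat pmf \<Rightarrow> nat pmf \<Rightarrow> nat \<Rightarrow> real \<Rightarrow> nat \<Rightarrow> nat \<Rightarrow> slot_outcome pmf" where
  "slot_pmf p q Nsub \<alpha> T t =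
     do { u \<leftarrow> p; c \<leftarrow> q;
          b \<leftarrow> (if attacked_slot \<alpha> T t then map_pmf Some (pmf_of_set {..<Nsub})
                else return_pmf None);
          return_pmf (u, c, b) }"

definition outcome_pmf ::
  "nat pmf \<Rightarrow> nat pmf \<Rightarrow> nat \<Rightarrow> real \<Rightarrow> nat \<Rightarrow> (nat \<Rightarrow> slot_outcome) pmf" where
  "outcome_pmf p q Nsub \<alpha> T = Pi_pmf {1..T} (0, 0, None) (\<lambda>t. slot_pmf p q Nsub \<alpha> T t)"

definition success :: "(nat \<Rightarrow> slot_outcome) \<Rightarrow> nat \<Rightarrow> nat \<Rightarrow> bool" where
  "success \<omega> i t \<longleftrightarrow> fst (\<omega> t) = i \<and> snd (snd (\<omega> t)) \<noteq> Some (fst (snd (\<omega> t)))"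

text \<open>Age a_i(t) for t \<ge> 1 (value at t = 0 is an unused convention).\<close>
fun age :: "(nat \<Rightarrow> slot_outcome) \<Rightarrow> nat \<Rightarrow> nat \<Rightarrow> nat" where
  "age \<omega> i 0 = 1"
| "age \<omega> i (Suc 0) = 1"
| "age \<omega> i (Suc (Suc t)) = (if success \<omega> i (Suc t) then 1 else age \<omega> i (Suc t) + 1)"

definition avg_aoi ::
  "nat \<Rightarrow> nat \<Rightarrow> real \<Rightarrow> nat \<Rightarrow> nat pmf \<Rightarrow> nat pmf \<Rightarrow> real" where
  "avg_aoi N Nsub \<alpha> T p q =
     (1 / real T) * (\<Sum>t = 1..T. (1 / real N) * (\<Sum>i<N.
        measure_pmf.expectation (outcome_pmf p q Nsub \<alpha> T) (\<lambda>\<omega>. real (age \<omega> i t))))"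

end

theory Submission
  imports Defs
begin

(*
  A slot delivers to user i exactly when i is chosen and the blocked sub-carrier (if any) is
  not the chosen one; in an attacked slot the blocked carrier is uniform and independent of
  the choice, so this has probability p_i (1 - 1/N_sub) whatever q is.  Writing the age at
  time t as 1 plus the number of j < t such that nothing was delivered in slots j, ..., t-1,
  independence across slots gives E a_i(t) = G_t(p_i) with
    G_t(x) = 1 + sum over j < t of the product over j <= s < t of (1 - x c_s),  c_s in [0,1].
  Products of the nonnegative, decreasing, convex factors 1 - x c_s are convex on [0,1], so
  G_t is convex and Jensen's inequality gives sum_i G_t(p_i) >= N G_t(1/N).  The sub-carrier
  pmf does not matter at all, and neither do the hypotheses on alpha, T and N_sub >= 2: the
  argument works for every set of attacked slots.
*)

lemma convex_on_reflect:
  fixes S :: "'a::real_vector set"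
  assumes "convex_on (uminus ` S) f"
  shows "convex_on S (\<lambda>x. f (- x))"
proof -
  have "convex S"
    using convex_negations[OF convex_on_imp_convex[OF assms]] by (simp add: image_image)
  with assms show ?thesis
    unfolding convex_on_def by (auto simp: algebra_simps)
qed

lemma convex_on_mul_antimono:
  fixes S :: "real set"
  assumes "convex_on S f" "convex_on S g"
  assumes "antimono_on S f" "antimono_on S g"
  assumes "f \<in> S \<rightarrow> {0..}" "g \<in> S \<rightarrow> {0..}"
  shows "convex_on S (\<lambda>x. f x * g x)"
proof -
  have "convex_on (uminus ` S) (\<lambda>x. f (- x) * g (- x))"
  proof (rule convex_on_mul)
    show "convex_on (uminus ` S) (\<lambda>x. f (- x))" "convex_on (uminus ` S) (\<lambda>x. g (- x))"
      using assms(1,2) by (auto intro: convex_on_reflect simp: image_image)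
    show "mono_on (uminus ` S) (\<lambda>x. f (- x))" "mono_on (uminus ` S) (\<lambda>x. g (- x))"
      using assms(3,4) by (auto simp: monotone_on_def)
  qed (use assms(5,6) in auto)
  then show ?thesis
    using convex_on_reflect by fastforce
qed

lemma convex_on_sum_fun:
  assumes "convex S" "\<And>i. i \<in> I \<Longrightarrow> convex_on S (f i)"
  shows "convex_on S (\<lambda>x. \<Sum>i\<in>I. f i x)"
  using assms(2)
  by (induction I rule: infinite_finite_induct) (auto simp: convex_on_const assms(1))

lemma antimono_on_prod_one_minus:
  fixes c :: "'i \<Rightarrow> real"
  assumes "\<And>i. i \<in> I \<Longrightarrow> c i \<in> {0..1}"
  shows "antimono_on {0..1} (\<lambda>x. \<Prod>i\<in>I. 1 - x * c i)"
  using assms by (auto simp: monotone_on_def intro!: prod_mono mult_right_mono mult_le_one)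

lemma convex_on_prod_one_minus:
  fixes c :: "'i \<Rightarrow> real"
  assumes "\<And>i. i \<in> I \<Longrightarrow> c i \<in> {0..1}"
  shows "convex_on {0..1} (\<lambda>x. \<Prod>i\<in>I. 1 - x * c i)"
  using assms
proof (induction I rule: infinite_finite_induct)
  case (insert j I)
  have "convex_on {0..1} (\<lambda>x. (1 - x * c j) * (\<Prod>i\<in>I. 1 - x * c i))"
  proof (rule convex_on_mul_antimono)
    show "convex_on {0..1} (\<lambda>x. 1 - x * c j)"
      by (rule convex_onI) (auto simp: algebra_simps)
    show "antimono_on {0..1} (\<lambda>x::real. 1 - x * c j)"
      using insert.prems by (auto simp: monotone_on_def intro: mult_right_mono)
    show "antimono_on {0..1} (\<lambda>x. \<Prod>i\<in>I. 1 - x * c i)"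
      using insert.prems by (intro antimono_on_prod_one_minus) auto
    show "(\<lambda>x. 1 - x * c j) \<in> {0..1} \<rightarrow> {0..}" "(\<lambda>x. \<Prod>i\<in>I. 1 - x * c i) \<in> {0..1} \<rightarrow> {0..}"
      using insert.prems by (auto intro!: prod_nonneg mult_le_one)
  qed (use insert in auto)
  with insert.hyps show ?case
    by simp
qed (auto simp: convex_on_const)

lemma convex_on_mean_le_sum:
  fixes w :: "'i \<Rightarrow> real"
  assumes "convex_on S f" "finite I" "I \<noteq> {}" "w ` I \<subseteq> S"
  shows "real (card I) * f ((\<Sum>i\<in>I. w i) / real (card I)) \<le> (\<Sum>i\<in>I. f (w i))"
proof -
  have "f (\<Sum>i\<in>I. (1 / real (card I)) *\<^sub>R w i) \<le> (\<Sum>i\<in>I. (1 / real (card I)) * f (w i))"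
    using assms by (intro convex_on_sum) auto
  moreover have "0 < real (card I)"
    using assms(2,3) by (simp add: card_gt_0_iff)
  ultimately show ?thesis
    by (simp add: sum_divide_distrib[symmetric] sum_distrib_left[symmetric] pos_le_divide_eq mult.commute)
qed

definition blocking_pmf :: "nat \<Rightarrow> real \<Rightarrow> nat \<Rightarrow> nat \<Rightarrow> nat option pmf" where
  "blocking_pmf n \<alpha> T t =
     (if attacked_slot \<alpha> T t then map_pmf Some (pmf_of_set {..<n}) else return_pmf None)"

definition unblocked_prob :: "nat \<Rightarrow> real \<Rightarrow> nat \<Rightarrow> nat \<Rightarrow> real" where
  "unblocked_prob n \<alpha> T t = (if attacked_slot \<alpha> T t then 1 - 1 / real n else 1)"

definition delivered :: "nat \<Rightarrow> slot_outcome set" where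
  "delivered i = {(u, c, b). u = i \<and> b \<noteq> Some c}"

lemma success_iff_delivered: "success \<omega> i t \<longleftrightarrow> \<omega> t \<in> delivered i"
  by (cases "\<omega> t") (auto simp: success_def delivered_def)

lemma unblocked_prob_bounds: "unblocked_prob n \<alpha> T t \<in> {0..1}"
  by (cases n) (auto simp: unblocked_prob_def)

lemma slot_pmf_eq_pair_pmf:
  "slot_pmf p q n \<alpha> T t = pair_pmf p (pair_pmf q (blocking_pmf n \<alpha> T t))"
  unfolding slot_pmf_def pair_pmf_def blocking_pmf_def
  by (simp add: bind_assoc_pmf bind_return_pmf)

lemma measure_blocking_pmf_not_Some:
  assumes "c < n"
  shows "measure (blocking_pmf n \<alpha> T t) (- {Some c}) = unblocked_prob n \<alpha> T t"
proof (cases "attacked_slot \<alpha> T t")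
  case True
  have "Some -` (- {Some c}) = - {c}"
    by auto
  moreover have "card ({..<n} \<inter> - {c}) = n - 1"
    using assms by (simp add: Int_commute Diff_eq[symmetric] card_Diff_singleton)
  ultimately show ?thesis
    using True assms by (simp add: blocking_pmf_def unblocked_prob_def measure_pmf_of_set
        of_nat_diff field_simps lessThan_empty_iff)
qed (simp add: blocking_pmf_def unblocked_prob_def)

lemma measure_delivered:
  assumes "set_pmf q \<subseteq> {..<n}"
  shows "measure (slot_pmf p q n \<alpha> T t) (delivered i) = pmf p i * unblocked_prob n \<alpha> T t"
proof -
  let ?B = "blocking_pmf n \<alpha> T t"
  define Y :: "(nat \<times> nat option) set" where "Y = {(c, b). b \<noteq> Some c}"
  have "emeasure (pair_pmf q ?B) Y = (\<integral>\<^sup>+c. emeasure ?B (- {Some c}) \<partial>q)"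
    unfolding pair_pmf_def Y_def by (simp add: indicator_def flip: nn_integral_indicator)
  also have "\<dots> = (\<integral>\<^sup>+c. ennreal (unblocked_prob n \<alpha> T t) \<partial>q)"
    using assms by (intro nn_integral_cong_AE AE_pmfI)
      (auto simp: measure_pmf.emeasure_eq_measure measure_blocking_pmf_not_Some)
  finally have "measure (pair_pmf q ?B) Y = unblocked_prob n \<alpha> T t"
    using unblocked_prob_bounds[of n \<alpha> T t]
    by (simp add: measure_pmf.emeasure_eq_measure measure_pmf.emeasure_space_1)
  moreover have "delivered i = {i} \<times> Y"
    by (auto simp: delivered_def Y_def)
  ultimately show ?thesis
    by (simp add: slot_pmf_eq_pair_pmf measure_pmf_prob_product measure_pmf_single)
qed

lemma real_age_Suc_eq_count_undelivered:
  "real (age \<omega> i (Suc t)) = 1 + (\<Sum>j=1..<Suc t. of_bool (\<forall>s\<in>{j..<Suc t}. \<not> success \<omega> i s))"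
proof (induction t)
  case (Suc t)
  have undelivered_run: "(\<forall>s\<in>{j..<Suc (Suc t)}. \<not> success \<omega> i s) \<longleftrightarrow>
      \<not> success \<omega> i (Suc t) \<and> (\<forall>s\<in>{j..<Suc t}. \<not> success \<omega> i s)" if "j \<le> Suc t" for j
    using that less_Suc_eq by auto
  have "(\<Sum>j=1..<Suc (Suc t). of_bool (\<forall>s\<in>{j..<Suc (Suc t)}. \<not> success \<omega> i s))
      = (if success \<omega> i (Suc t) then 0
         else 1 + (\<Sum>j=1..<Suc t. of_bool (\<forall>s\<in>{j..<Suc t}. \<not> success \<omega> i s)) :: real)"
    by (simp add: sum.atLeastLessThan_Suc undelivered_run)
  with Suc.IH show ?case
    by simp
qed simp

lemma measure_no_delivery:
  assumes "S \<subseteq> {1..T}" "set_pmf q \<subseteq> {..<n}"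
  shows "measure (outcome_pmf p q n \<alpha> T) {\<omega>. \<forall>s\<in>S. \<not> success \<omega> i s}
       = (\<Prod>s\<in>S. 1 - pmf p i * unblocked_prob n \<alpha> T s)"
proof -
  let ?B = "\<lambda>s. if s \<in> S then - delivered i else UNIV"
  have "{\<omega>. \<forall>s\<in>S. \<not> success \<omega> i s} = Pi {1..T} ?B"
    using assms(1) by (fastforce simp: success_iff_delivered Pi_iff)
  then have "measure (outcome_pmf p q n \<alpha> T) {\<omega>. \<forall>s\<in>S. \<not> success \<omega> i s}
      = (\<Prod>s\<in>{1..T}. measure (slot_pmf p q n \<alpha> T s) (?B s))"
    by (simp add: outcome_pmf_def measure_Pi_pmf_Pi)
  also have "\<dots> = (\<Prod>s\<in>{1..T}. if s \<in> S then 1 - pmf p i * unblocked_prob n \<alpha> T s else 1)"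
    using measure_pmf.prob_compl[of "delivered i"] measure_delivered[OF assms(2)]
    by (intro prod.cong refl) (simp add: Compl_eq_Diff_UNIV)
  also have "\<dots> = (\<Prod>s\<in>S. 1 - pmf p i * unblocked_prob n \<alpha> T s)"
    using assms(1) by (simp add: prod.If_cases Int_absorb1)
  finally show ?thesis .
qed

lemma expectation_const_plus_sum_of_bool:
  "measure_pmf.expectation M (\<lambda>x. c + (\<Sum>j\<in>J. of_bool (P j x))) = c + (\<Sum>j\<in>J. measure M {x. P j x})"
proof -
  have "(\<lambda>x. of_bool (P j x) :: real) = indicator {x. P j x}" for j
    by (auto simp: indicator_def)
  then have "measure_pmf.expectation M (\<lambda>x. of_bool (P j x) :: real) = measure M {x. P j x}" for j
    by simp
  moreover have "integrable M (\<lambda>x. of_bool (P j x) :: real)" for j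
    by (rule measure_pmf.integrable_const_bound[where B=1]) auto
  ultimately show ?thesis
    by (simp add: Bochner_Integration.integral_add Bochner_Integration.integral_sum)
qed

definition mean_age :: "nat \<Rightarrow> real \<Rightarrow> nat \<Rightarrow> nat \<Rightarrow> real \<Rightarrow> real" where
  "mean_age n \<alpha> T t x = 1 + (\<Sum>j=1..<t. \<Prod>s=j..<t. 1 - x * unblocked_prob n \<alpha> T s)"

lemma expectation_age:
  assumes "t \<in> {1..T}" "set_pmf q \<subseteq> {..<n}"
  shows "measure_pmf.expectation (outcome_pmf p q n \<alpha> T) (\<lambda>\<omega>. real (age \<omega> i t))
       = mean_age n \<alpha> T t (pmf p i)"
proof -
  obtain t' where t: "t = Suc t'"
    using assms(1) by (cases t) auto
  let ?M = "outcome_pmf p q n \<alpha> T"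
  have "measure_pmf.expectation ?M (\<lambda>\<omega>. real (age \<omega> i t))
      = 1 + (\<Sum>j=1..<t. measure ?M {\<omega>. \<forall>s\<in>{j..<t}. \<not> success \<omega> i s})"
    unfolding t real_age_Suc_eq_count_undelivered by (rule expectation_const_plus_sum_of_bool)
  also have "\<dots> = mean_age n \<alpha> T t (pmf p i)"
    using assms unfolding mean_age_def
    by (intro arg_cong2[where f="(+)"] sum.cong refl measure_no_delivery) auto
  finally show ?thesis .
qed

lemma convex_on_mean_age: "convex_on {0..1} (mean_age n \<alpha> T t)"
proof -
  have "convex_on {0..1} (\<lambda>x. \<Sum>j=1..<t. \<Prod>s=j..<t. 1 - x * unblocked_prob n \<alpha> T s)"
    by (intro convex_on_sum_fun convex_on_prod_one_minus unblocked_prob_bounds) simp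
  then show ?thesis
    unfolding mean_age_def[abs_def] by (intro convex_on_add) (simp_all add: convex_on_const)
qed

lemma avg_aoi_eq_mean_age:
  assumes "set_pmf q \<subseteq> {..<n}"
  shows "avg_aoi N n \<alpha> T p q
       = 1 / real T * (\<Sum>t=1..T. 1 / real N * (\<Sum>i<N. mean_age n \<alpha> T t (pmf p i)))"
  unfolding avg_aoi_def using assms by (simp add: expectation_age)

theorem theorem12:
  fixes N Nsub T :: nat and \<alpha> :: real
  assumes "N \<ge> 1" and "Nsub \<ge> 2"
    and "0 < \<alpha>" and "\<alpha> < 1"
    and "\<alpha> * real T \<in> \<int>"
    and "\<exists>k::nat. (1 - \<alpha>) * real T = 2 * real k"
  shows "\<forall>p q. set_pmf p \<subseteq> {..<N} \<longrightarrow> set_pmf q \<subseteq> {..<Nsub} \<longrightarrow>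
           avg_aoi N Nsub \<alpha> T (pmf_of_set {..<N}) (pmf_of_set {..<Nsub})
             \<le> avg_aoi N Nsub \<alpha> T p q"
proof (intro allI impI)
  fix p q :: "nat pmf"
  assume p: "set_pmf p \<subseteq> {..<N}" and q: "set_pmf q \<subseteq> {..<Nsub}"
  have nonempty: "{..<N} \<noteq> {}" "{..<Nsub} \<noteq> {}"
    using assms(1,2) by (auto simp: lessThan_empty_iff)
  have "real N * mean_age Nsub \<alpha> T t (1 / real N) \<le> (\<Sum>i<N. mean_age Nsub \<alpha> T t (pmf p i))" for t
    using convex_on_mean_le_sum[OF convex_on_mean_age, of "{..<N}" "pmf p"] nonempty(1)
      sum_pmf_eq_1[of "{..<N}" p] p
    by (force simp: pmf_le_1)
  moreover have "avg_aoi N Nsub \<alpha> T (pmf_of_set {..<N}) (pmf_of_set {..<Nsub})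
      = 1 / real T * (\<Sum>t=1..T. 1 / real N * (real N * mean_age Nsub \<alpha> T t (1 / real N)))"
    using nonempty by (simp add: avg_aoi_eq_mean_age)
  ultimately have "avg_aoi N Nsub \<alpha> T (pmf_of_set {..<N}) (pmf_of_set {..<Nsub})
      \<le> 1 / real T * (\<Sum>t=1..T. 1 / real N * (\<Sum>i<N. mean_age Nsub \<alpha> T t (pmf p i)))"
    by (simp only:) (intro mult_left_mono sum_mono; simp)
  also have "\<dots> = avg_aoi N Nsub \<alpha> T p q"
    using q by (simp add: avg_aoi_eq_mean_age)
  finally show "avg_aoi N Nsub \<alpha> T (pmf_of_set {..<N}) (pmf_of_set {..<Nsub}) \<le> avg_aoi N Nsub \<alpha> T p q" .
qed

end
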